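(* Let $n$ be a positive integer and let $\Phi,\Psi\colon[n]^n\to[n]^n$ be the maps defined in the context. Then: (1) for all $\mathbf a\in[n]^n$, $z(\mathbf a)=\operatorname{run}(\Phi(\mathbf a))$, $Z(\mathbf a)=\operatorname{Run}(\Phi(\mathbf a))$, $\operatorname{run}(\mathbf a)=z(\Psi(\mathbf a))$ and $\operatorname{Run}(\mathbf a)=Z(\Psi(\mathbf a))$; (2) $\Phi$ and $\Psi$ are bijections and $\Psi=\Phi^{-1}$; (3) $\Phi(\mathsf{PF}_n)=\mathsf{PF}_n$.
   Context: Let $[n]=\{1,\dots,n\}$ and write $\mathbf a\in[n]^n$ as $(a_1,\dots,a_n)$, also viewed as a function $j\mapsto a_j$. $\mathsf{PF}_n$ is the set of $\mathbf a\in[n]^n$ with $|\{j:a_j\le i\}|\ge i$ for every $i\in[n]$ (parking functions). Center: $Z(\mathbf a)$ is the largest subset $X=\{x_1<\dots<x_\ell\}\subseteq[n]$ with $a_{x_i}\le i$ for all $i\in[\ell]$; $z(\mathbf a)=|Z(\mathbf a)|$. Run: if $1\in\{a_1,\dots,a_n\}$, $\operatorname{run}(\mathbf a)=\max\{i\in[n]: [i]\subseteq\{a_1,\dots,a_n\}\}$; otherwise $\operatorname{run}(\mathbf a)=0$. $\operatorname{Run}(\mathbf a)=\{\max\{j: a_j=m\}: 1\le m\le \operatorname{run}(\mathbf a)\}$ (empty if $\operatorname{run}(\mathbf a)=0$). For a permutation $\mathbf w=(w_1,\dots,w_k)\in\mathfrak S_k$, define $f_{w_i}=|\{m\in[i]: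 w_m\le w_i\}|$ for $i\in[k]$ and $t_k(\mathbf w)=(f_1,\dots,f_k)$; $t_k$ is a bijection from $\mathfrak S_k$ onto $[1]\times[2]\times\dots\times[k]$. Definition of $\Phi$: if $Z(\mathbf a)=\varnothing$, $\Phi(\mathbf a)=\mathbf a$. Otherwise let $Z(\mathbf a)=\{i_1<\dots<i_k\}$, let $\mathbf b=b_1\cdots b_k=t_k^{-1}(a_{i_1}\cdots a_{i_k})\in\mathfrak S_k$, and let $\sigma_{\mathbf a}\in\mathfrak S_n$ be given by $\sigma_{\mathbf a}(1)=k+1$, $\sigma_{\mathbf a}(j)=b_{j-1}$ for $2\le j\le k+1$, $\sigma_{\mathbf a}(j)=j$ for $k+2\le j\le n$. Then $\Phi(\mathbf a)(j)=b_\ell$ if $j=i_\ell\in Z(\mathbf a)$, and $\Phi(\mathbf a)(j)=\sigma_{\mathbf a}(a_j)$ if $j\notin Z(\mathbf a)$. Definition of $\Psi$: if $\operatorname{Run}(\mathbf a)=\varnothing$, $\Psi(\mathbf a)=\mathbf a$. Otherwise let $\operatorname{Run}(\mathbf a)=\{i_1<\dots<i_k\}$, let $\mathbf c=c_1\cdots c_k=t_k(a_{i_1}\cdots a_{i_k})$, and let $\tau_{\mathbf a}\in\mathfrak S_n$ be given by $\tau_{\mathbf a}(j)=\ell+1$ if $j=a_{i_\ell}\in[k]$, $\tau_{\mathbf a}(k+1)=1$, $\tau_{\mathbf a}(j)=j$ for $k+2\le j\le n$. Then $\Psi(\mathbf a)(j)=c_\ell$ if $j=i_\ell\in\operatorname{Run}(\mathbf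 a)$, and $\Psi(\mathbf a)(j)=\tau_{\mathbf a}(a_j)$ if $j\notin\operatorname{Run}(\mathbf a)$. *)

theory Defs
  imports "HOL-Library.FuncSet"
begin

(* Sequences of length k are functions on {1..k}; entry number l of a
  finite set S of naturals (l-th smallest, 1-based) is
  sorted_list_of_set S ! (l - 1). *)

definition words :: "nat \<Rightarrow> (nat \<Rightarrow> nat) set" where
  "words n = {1..n} \<rightarrow>\<^sub>E {1..n}"

definition PF :: "nat \<Rightarrow> (nat \<Rightarrow> nat) set" where
  "PF n = {a \<in> words n. \<forall>i \<in> {1..n}. card {j \<in> {1..n}. a j \<le> i} \<ge> i}"

definition nth_elem :: "nat set \<Rightarrow> nat \<Rightarrow> nat" where
  "nth_elem S l = sorted_list_of_set S ! (l - 1)"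

definition center_ok :: "nat \<Rightarrow> (nat \<Rightarrow> nat) \<Rightarrow> nat set \<Rightarrow> bool" where
  "center_ok n a X \<longleftrightarrow> X \<subseteq> {1..n} \<and>
     (\<forall>i \<in> {1..card X}. a (nth_elem X i) \<le> i)"

definition Zc :: "nat \<Rightarrow> (nat \<Rightarrow> nat) \<Rightarrow> nat set" where
  "Zc n a = (GREATEST X. center_ok n a X)"

definition zc :: "nat \<Rightarrow> (nat \<Rightarrow> nat) \<Rightarrow> nat" where
  "zc n a = card (Zc n a)"

definition run :: "nat \<Rightarrow> (nat \<Rightarrow> nat) \<Rightarrow> nat" where
  "run n a = (if 1 \<in> a ` {1..n}
      then Max {i \<in> {1..n}. {1..i} \<subseteq> a ` {1..n}} else 0)"

definition Run :: "nat \<Rightarrow> (nat \<Rightarrow> nat) \<Rightarrow> nat set" where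
  "Run n a = (\<lambda>m. Max {j \<in> {1..n}. a j = m}) ` {1..run n a}"

definition perms :: "nat \<Rightarrow> (nat \<Rightarrow> nat) set" where
  "perms k = {w \<in> {1..k} \<rightarrow>\<^sub>E {1..k}. bij_betw w {1..k} {1..k}}"

definition tk :: "nat \<Rightarrow> (nat \<Rightarrow> nat) \<Rightarrow> (nat \<Rightarrow> nat)" where
  "tk k w = restrict (\<lambda>v. let i = (THE i. i \<in> {1..k} \<and> w i = v)
                           in card {m \<in> {1..i}. w m \<le> w i}) {1..k}"

definition tk_inv :: "nat \<Rightarrow> (nat \<Rightarrow> nat) \<Rightarrow> (nat \<Rightarrow> nat)" where
  "tk_inv k f = (THE w. w \<in> perms k \<and> tk k w = f)"

definition Phi :: "nat \<Rightarrow> (nat \<Rightarrow> nat) \<Rightarrow> (nat \<Rightarrow> nat)" where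
  "Phi n a = (if Zc n a = {} then a else
     (let Z = Zc n a; k = card Z;
          b = tk_inv k (restrict (\<lambda>l. a (nth_elem Z l)) {1..k});
          \<sigma> = (\<lambda>j. if j = 1 then k + 1 else if 2 \<le> j \<and> j \<le> k + 1 then b (j - 1) else j)
      in restrict (\<lambda>j. if j \<in> Z then b (THE l. l \<in> {1..k} \<and> nth_elem Z l = j)
                       else \<sigma> (a j)) {1..n}))"

definition Psi :: "nat \<Rightarrow> (nat \<Rightarrow> nat) \<Rightarrow> (nat \<Rightarrow> nat)" where
  "Psi n a = (if Run n a = {} then a else
     (let R = Run n a; k = card R;
          c = tk k (restrict (\<lambda>l. a (nth_elem R l)) {1..k});
          \<tau> = (\<lambda>j. if j \<in> {1..k} then (THE l. l \<in> {1..k} \<and> a (nth_elem R l) = j) + 1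
                   else if j = k + 1 then 1 else j)
      in restrict (\<lambda>j. if j \<in> R then c (THE l. l \<in> {1..k} \<and> nth_elem R l = j)
                       else \<tau> (a j)) {1..n}))"

end

theory Submission
  imports Defs "HOL-Combinatorics.Permutations"
begin

text \<open>
  Write \<open>rank X x\<close> for the number of elements of \<open>X\<close> that are \<open>\<le> x\<close>, so that \<open>X\<close> is admissible
  for \<open>a\<close> iff \<open>a x \<le> rank X x\<close> on \<open>X\<close>. Admissible sets are closed under union, hence the center
  \<open>Z\<close> is the union of all of them, and no position \<open>j \<notin> Z\<close> can be added: \<open>a j > rank Z j + 1\<close>.

  \<open>Phi\<close> replaces the values on \<open>Z\<close>, which form an inversion table, by the permutation \<open>b\<close> of
  \<open>1..k\<close> with that table, and shifts the remaining values by \<open>\<sigma>\<close>, which fixes everything above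
  \<open>k + 1\<close>. Then the values \<open>1..k\<close> occur and \<open>k + 1\<close> does not, and maximality of \<open>Z\<close> forces the
  last occurrence of \<open>b l\<close> to be the \<open>l\<close>-th element of \<open>Z\<close>: so \<open>Z\<close> becomes the run set. Dually,
  \<open>Psi\<close> turns the run set \<open>R\<close> into an admissible set, and every position outside \<open>R\<close> lies
  left of the last occurrence of its value, which keeps it out of the center. On \<open>Z\<close> resp.
  \<open>R\<close> the two maps apply \<open>t_k\<close> and its inverse, and off these sets \<open>\<sigma>\<close> and \<open>\<tau>\<close> are inverse,
  so \<open>Phi\<close> and \<open>Psi\<close> are mutually inverse. Parking functions are preserved because the counts
  \<open>#{j. a j \<le> i}\<close> are unchanged for \<open>i > k\<close> and at least \<open>i\<close> for \<open>i \<le> k\<close>.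
\<close>

definition rank :: "nat set \<Rightarrow> nat \<Rightarrow> nat" where
  "rank X x = card {y \<in> X. y \<le> x}"

lemma card_le_nth_strict_sorted:
  fixes xs :: "nat list"
  assumes sorted: "sorted_wrt (<) xs" and p: "p < length xs"
  shows "card {y \<in> set xs. y \<le> xs ! p} = Suc p"
proof -
  have "{y \<in> set xs. y \<le> xs ! p} = (!) xs ` {0..p}"
  proof (intro set_eqI iffI)
    fix y assume "y \<in> {y \<in> set xs. y \<le> xs ! p}"
    then obtain i where i: "i < length xs" "y = xs ! i" "xs ! i \<le> xs ! p"
      by (auto simp: in_set_conv_nth)
    then have "i \<le> p"
      using sorted_wrt_nth_less[OF sorted, of p i] by (metis leD le_less_linear)
    then show "y \<in> (!) xs ` {0..p}" using i by auto
  next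
    fix y assume "y \<in> (!) xs ` {0..p}"
    then obtain i where i: "i \<le> p" "y = xs ! i" by auto
    then have "xs ! i \<le> xs ! p"
      using sorted_wrt_nth_less[OF sorted, of i p] p by (cases "i = p") auto
    then show "y \<in> {y \<in> set xs. y \<le> xs ! p}" using i p by auto
  qed
  moreover have "inj_on ((!) xs) {0..p}"
    using sorted p by (auto simp: inj_on_def nth_eq_iff_index_eq strict_sorted_iff)
  ultimately show ?thesis by (simp add: card_image)
qed

lemma nth_elem_mem:
  assumes "finite X" "l \<in> {1..card X}"
  shows "nth_elem X l \<in> X"
proof -
  have "l - 1 < length (sorted_list_of_set X)" using assms by auto
  then have "sorted_list_of_set X ! (l - 1) \<in> set (sorted_list_of_set X)" by (rule nth_mem)
  then show ?thesis using assms(1) by (simp add: nth_elem_def)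
qed

lemma rank_nth_elem:
  assumes "finite X" "l \<in> {1..card X}"
  shows "rank X (nth_elem X l) = l"
proof -
  have "l - 1 < length (sorted_list_of_set X)" using assms by auto
  from card_le_nth_strict_sorted[OF _ this] show ?thesis
    using assms by (simp add: rank_def nth_elem_def strict_sorted_list_of_set)
qed

lemma rank_mem:
  assumes "finite X" "x \<in> X"
  shows "rank X x \<in> {1..card X}"
proof -
  have "x \<in> {y \<in> X. y \<le> x}" using assms by simp
  then have "card {y \<in> X. y \<le> x} > 0" using assms by (auto simp: card_gt_0_iff)
  moreover have "card {y \<in> X. y \<le> x} \<le> card X" using assms by (intro card_mono) auto
  ultimately show ?thesis by (simp add: rank_def)
qed

lemma rank_mono: "finite X \<Longrightarrow> x \<le> y \<Longrightarrow> rank X x \<le> rank X y"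
  unfolding rank_def by (rule card_mono) auto

lemma rank_le_card: "finite X \<Longrightarrow> rank X x \<le> card X"
  unfolding rank_def by (rule card_mono) auto

lemma rank_less:
  assumes "finite X" "y \<in> X" "x < y"
  shows "rank X x < rank X y"
proof -
  have "{z \<in> X. z \<le> x} \<subseteq> {z \<in> X. z \<le> y}" "y \<in> {z \<in> X. z \<le> y} - {z \<in> X. z \<le> x}"
    using assms by auto
  then have "{z \<in> X. z \<le> x} \<subset> {z \<in> X. z \<le> y}" by blast
  then show ?thesis unfolding rank_def by (rule psubset_card_mono[rotated]) (use assms in auto)
qed

lemma rank_insert_self: "finite X \<Longrightarrow> j \<notin> X \<Longrightarrow> rank (insert j X) j = Suc (rank X j)"
proof -
  assume "finite X" "j \<notin> X"
  moreover have "{y \<in> insert j X. y \<le> j} = insert j {y \<in> X. y \<le> j}" by auto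
  ultimately show ?thesis unfolding rank_def by simp
qed

lemma inj_on_rank: "finite X \<Longrightarrow> inj_on (rank X) X"
proof (rule inj_onI)
  fix x y assume "finite X" "x \<in> X" "y \<in> X" "rank X x = rank X y"
  then show "x = y"
    using rank_less[of X x y] rank_less[of X y x] by (cases x y rule: linorder_cases) auto
qed

lemma nth_elem_rank:
  assumes "finite X" "x \<in> X"
  shows "nth_elem X (rank X x) = x"
proof (rule inj_onD[OF inj_on_rank[OF assms(1)]])
  show "rank X (nth_elem X (rank X x)) = rank X x" "nth_elem X (rank X x) \<in> X"
    using rank_nth_elem[OF assms(1)] nth_elem_mem[OF assms(1)] rank_mem[OF assms] by auto
qed (use assms in simp)

lemma bij_betw_nth_elem:
  assumes "finite X" shows "bij_betw (nth_elem X) {1..card X} X"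
proof (rule bij_betw_byWitness[where f' = "rank X"])
  show "\<forall>l\<in>{1..card X}. rank X (nth_elem X l) = l" using rank_nth_elem[OF assms] by blast
  show "\<forall>x\<in>X. nth_elem X (rank X x) = x" using nth_elem_rank[OF assms] by blast
  show "nth_elem X ` {1..card X} \<subseteq> X" using nth_elem_mem[OF assms] by blast
  show "rank X ` X \<subseteq> {1..card X}" using rank_mem[OF assms] by blast
qed

lemma the_nth_elem_eq_rank:
  assumes "finite X" "x \<in> X"
  shows "(THE l. l \<in> {1..card X} \<and> nth_elem X l = x) = rank X x"
proof (rule the_equality)
  show "rank X x \<in> {1..card X} \<and> nth_elem X (rank X x) = x"
    using rank_mem[OF assms] nth_elem_rank[OF assms] by blast
  fix l assume "l \<in> {1..card X} \<and> nth_elem X l = x"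
  then show "l = rank X x" using rank_nth_elem[OF assms(1), of l] by auto
qed

lemma rank_mono_set: "finite Y \<Longrightarrow> X \<subseteq> Y \<Longrightarrow> rank X x \<le> rank Y x"
  unfolding rank_def by (rule card_mono) auto

section \<open>The center\<close>

lemma center_ok_iff_rank:
  "center_ok n a X \<longleftrightarrow> X \<subseteq> {1..n} \<and> (\<forall>x\<in>X. a x \<le> rank X x)"
proof (cases "X \<subseteq> {1..n}")
  case True
  then have fin: "finite X" by (rule finite_subset) simp
  have eq: "(\<forall>i \<in> {1..card X}. a (nth_elem X i) \<le> i) \<longleftrightarrow> (\<forall>x\<in>X. a x \<le> rank X x)"
  proof (intro iffI ballI)
    fix x assume le: "\<forall>i \<in> {1..card X}. a (nth_elem X i) \<le> i" and x: "x \<in> X"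
    have "a (nth_elem X (rank X x)) \<le> rank X x" using le rank_mem[OF fin x] by blast
    then show "a x \<le> rank X x" using nth_elem_rank[OF fin x] by simp
  next
    fix i assume le: "\<forall>x\<in>X. a x \<le> rank X x" and i: "i \<in> {1..card X}"
    have "a (nth_elem X i) \<le> rank X (nth_elem X i)" using le nth_elem_mem[OF fin i] by blast
    then show "a (nth_elem X i) \<le> i" using rank_nth_elem[OF fin i] by simp
  qed
  show ?thesis unfolding center_ok_def eq using True by simp
next
  case False
  then show ?thesis unfolding center_ok_def by simp
qed

lemma center_okD:
  assumes "center_ok n a X"
  shows "X \<subseteq> {1..n}" "\<And>x. x \<in> X \<Longrightarrow> a x \<le> rank X x"
  using assms unfolding center_ok_iff_rank by blast+

lemma center_okI:
  "X \<subseteq> {1..n} \<Longrightarrow> (\<And>x. x \<in> X \<Longrightarrow> a x \<le> rank X x) \<Longrightarrow> center_ok n a X"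
  unfolding center_ok_iff_rank by blast

lemma center_ok_Union: "center_ok n a (\<Union>{X. center_ok n a X})"
proof -
  let ?U = "\<Union>{X. center_ok n a X}"
  have sub: "?U \<subseteq> {1..n}" using center_okD(1) by blast
  then have "finite ?U" by (rule finite_subset) simp
  have "a x \<le> rank ?U x" if "x \<in> ?U" for x
  proof -
    obtain X where X: "center_ok n a X" "x \<in> X" using \<open>x \<in> ?U\<close> by blast
    then have "a x \<le> rank X x" by (rule center_okD(2))
    also have "\<dots> \<le> rank ?U x" using X \<open>finite ?U\<close> by (intro rank_mono_set) auto
    finally show ?thesis .
  qed
  with sub show ?thesis by (rule center_okI)
qed

lemma Zc_eq_Union: "Zc n a = \<Union>{X. center_ok n a X}"
  unfolding Zc_def
proof (rule Greatest_equality)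
  show "center_ok n a (\<Union>{X. center_ok n a X})" by (rule center_ok_Union)
qed (rule Union_upper, simp)

lemma center_ok_Zc: "center_ok n a (Zc n a)"
  unfolding Zc_eq_Union by (rule center_ok_Union)

lemma center_ok_subset_Zc: "center_ok n a X \<Longrightarrow> X \<subseteq> Zc n a"
  unfolding Zc_eq_Union by blast

lemma Zc_subset: "Zc n a \<subseteq> {1..n}"
  by (rule center_okD(1)[OF center_ok_Zc])

lemma finite_Zc: "finite (Zc n a)"
  using Zc_subset by (rule finite_subset) simp

lemma Zc_le_rank: "x \<in> Zc n a \<Longrightarrow> a x \<le> rank (Zc n a) x"
  by (rule center_okD(2)[OF center_ok_Zc])

text \<open>Maximality of the center: in \<open>insert j (Zc n a)\<close> the position \<open>j\<close> has rank
  \<open>Suc (rank (Zc n a) j)\<close>, so otherwise \<open>j\<close> could be added.\<close>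

lemma rank_less_notin_Zc:
  assumes "j \<in> {1..n}" "j \<notin> Zc n a"
  shows "Suc (rank (Zc n a) j) < a j"
proof (rule ccontr)
  let ?Z = "Zc n a"
  assume "\<not> Suc (rank ?Z j) < a j"
  then have "a j \<le> rank (insert j ?Z) j"
    using rank_insert_self[OF finite_Zc assms(2)] by simp
  moreover have "a x \<le> rank (insert j ?Z) x" if "x \<in> ?Z" for x
  proof -
    have "rank ?Z x \<le> rank (insert j ?Z) x" by (rule rank_mono_set) (auto simp: finite_Zc)
    then show ?thesis using Zc_le_rank[OF that] by linarith
  qed
  ultimately have "center_ok n a (insert j ?Z)"
    using assms(1) Zc_subset by (intro center_okI) auto
  then show False using center_ok_subset_Zc assms(2) by blast
qed

lemma Zc_eqI:
  assumes sub: "X \<subseteq> {1..n}" and le: "\<And>x. x \<in> X \<Longrightarrow> a x \<le> rank X x"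
    and out: "\<And>j. j \<in> {1..n} \<Longrightarrow> j \<notin> X \<Longrightarrow> Suc (rank X j) < a j"
  shows "Zc n a = X"
proof -
  have "finite X" using sub by (rule finite_subset) simp
  have maximal: "Y \<subseteq> X" if Y: "center_ok n a Y" for Y
  proof (rule ccontr)
    assume "\<not> Y \<subseteq> X"
    have "finite Y" using Y unfolding center_ok_def using finite_subset by blast
    define y where "y = Min (Y - X)"
    have y: "y \<in> Y" "y \<notin> X" "y \<in> {1..n}"
      using Min_in[of "Y - X"] \<open>finite Y\<close> \<open>\<not> Y \<subseteq> X\<close> Y unfolding y_def center_ok_def by auto
    have below: "y' \<in> X" if "y' \<in> Y" "y' < y" for y'
    proof (rule ccontr)
      assume "y' \<notin> X"
      then have "y \<le> y'" unfolding y_def using that \<open>finite Y\<close> by (intro Min_le) auto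
      then show False using that by simp
    qed
    have "a y \<le> rank Y y" using center_okD(2)[OF Y y(1)] .
    also have "\<dots> \<le> rank (insert y X) y"
      unfolding rank_def
    proof (rule card_mono)
      show "{z \<in> Y. z \<le> y} \<subseteq> {z \<in> insert y X. z \<le> y}"
      proof
        fix z assume "z \<in> {z \<in> Y. z \<le> y}"
        then show "z \<in> {z \<in> insert y X. z \<le> y}" using below[of z] by (cases "z = y") auto
      qed
    qed (use \<open>finite X\<close> in simp)
    also have "\<dots> = Suc (rank X y)" using rank_insert_self \<open>finite X\<close> y by blast
    also have "\<dots> < a y" using out y by blast
    finally show False by simp
  qed
  have "center_ok n a X" using sub le by (rule center_okI)
  then show ?thesis using center_ok_subset_Zc[of n a X] maximal[OF center_ok_Zc] by blast
qed

lemma run_mem: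
  assumes "1 \<in> a ` {1..n}"
  shows "run n a \<in> {i \<in> {1..n}. {1..i} \<subseteq> a ` {1..n}}"
    and "\<And>i. i \<in> {1..n} \<Longrightarrow> {1..i} \<subseteq> a ` {1..n} \<Longrightarrow> i \<le> run n a"
proof -
  let ?S = "{i \<in> {1..n}. {1..i} \<subseteq> a ` {1..n}}"
  have fin: "finite ?S" by (rule finite_subset[of _ "{1..n}"]) auto
  have "1 \<in> ?S" using assms by auto
  then show "run n a \<in> ?S"
    unfolding run_def if_P[OF assms] using Max_in[OF fin] by blast
  show "\<And>i. i \<in> {1..n} \<Longrightarrow> {1..i} \<subseteq> a ` {1..n} \<Longrightarrow> i \<le> run n a"
    unfolding run_def if_P[OF assms] using Max_ge[OF fin] by blast
qed

lemma atLeastAtMost_run_subset: "{1..run n a} \<subseteq> a ` {1..n}"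
proof (cases "1 \<in> a ` {1..n}")
  case True
  then show ?thesis using run_mem(1)[OF True] by blast
qed (simp add: run_def)

lemma run_le: "run n a \<le> n"
proof (cases "1 \<in> a ` {1..n}")
  case True
  then show ?thesis using run_mem(1)[OF True] by simp
qed (simp add: run_def)

lemma Suc_run_notin_image:
  assumes "run n a < n"
  shows "Suc (run n a) \<notin> a ` {1..n}"
proof
  assume Suc: "Suc (run n a) \<in> a ` {1..n}"
  show False
  proof (cases "1 \<in> a ` {1..n}")
    case True
    have "{1..Suc (run n a)} = insert (Suc (run n a)) {1..run n a}" by auto
    then have "{1..Suc (run n a)} \<subseteq> a ` {1..n}"
      using atLeastAtMost_run_subset[of n a] Suc by simp
    then have "Suc (run n a) \<le> run n a" using run_mem(2)[OF True] assms by simp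
    then show False by simp
  qed (use Suc in \<open>simp add: run_def\<close>)
qed

lemma run_eqI:
  assumes "{1..k} \<subseteq> a ` {1..n}" "k \<le> n" "k < n \<Longrightarrow> Suc k \<notin> a ` {1..n}"
  shows "run n a = k"
proof (cases "k = 0")
  case True
  then have "1 \<notin> a ` {1..n}" using assms(3) by (cases "n = 0") auto
  then show ?thesis using True by (simp add: run_def)
next
  case False
  then have one: "1 \<in> a ` {1..n}" using assms(1) by auto
  have "run n a \<le> k"
  proof (rule ccontr)
    assume "\<not> run n a \<le> k"
    then have "Suc k \<in> a ` {1..n}" "k < n"
      using atLeastAtMost_run_subset[of n a] run_le[of n a] by auto
    then show False using assms(3) by blast
  qed
  moreover have "k \<le> run n a" using run_mem(2)[OF one] assms False by simp
  ultimately show ?thesis by simp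
qed

definition last_occ :: "nat \<Rightarrow> (nat \<Rightarrow> nat) \<Rightarrow> nat \<Rightarrow> nat" where
  "last_occ n a m = Max {j \<in> {1..n}. a j = m}"

lemma Run_eq_image_last_occ: "Run n a = last_occ n a ` {1..run n a}"
  unfolding Run_def last_occ_def ..

lemma
  assumes "m \<in> a ` {1..n}"
  shows last_occ_mem: "last_occ n a m \<in> {1..n}"
    and apply_last_occ: "a (last_occ n a m) = m"
    and le_last_occ: "\<And>j. j \<in> {1..n} \<Longrightarrow> a j = m \<Longrightarrow> j \<le> last_occ n a m"
proof -
  have "{j \<in> {1..n}. a j = m} \<noteq> {}" using assms by auto
  then have "Max {j \<in> {1..n}. a j = m} \<in> {j \<in> {1..n}. a j = m}" by (intro Max_in) auto
  then show "last_occ n a m \<in> {1..n}" "a (last_occ n a m) = m" unfolding last_occ_def by auto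
  show "\<And>j. j \<in> {1..n} \<Longrightarrow> a j = m \<Longrightarrow> j \<le> last_occ n a m"
    unfolding last_occ_def by (rule Max_ge) auto
qed

lemma last_occ_eqI:
  assumes "x \<in> {1..n}" "a x = m" "\<And>j. j \<in> {1..n} \<Longrightarrow> a j = m \<Longrightarrow> j \<le> x"
  shows "last_occ n a m = x"
  unfolding last_occ_def by (rule Max_eqI) (use assms in auto)

lemma card_Run: "card (Run n a) = run n a"
proof -
  have "inj_on (last_occ n a) {1..run n a}"
  proof (rule inj_onI)
    fix x y assume "x \<in> {1..run n a}" "y \<in> {1..run n a}" "last_occ n a x = last_occ n a y"
    then show "x = y" using apply_last_occ atLeastAtMost_run_subset[of n a] by (metis subsetD)
  qed
  then show ?thesis unfolding Run_eq_image_last_occ by (simp add: card_image)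
qed

lemma count_ge_if_atLeastAtMost_subset_image:
  fixes a :: "nat \<Rightarrow> nat"
  assumes "{1..i} \<subseteq> a ` {1..n}"
  shows "i \<le> card {j \<in> {1..n}. a j \<le> i}"
proof -
  have fin: "finite {j \<in> {1..n}. a j \<le> i}" by simp
  have "{1..i} \<subseteq> a ` {j \<in> {1..n}. a j \<le> i}" using assms by force
  then have "card {1..i} \<le> card (a ` {j \<in> {1..n}. a j \<le> i})"
    by (rule card_mono[OF finite_imageI[OF fin]])
  also have "\<dots> \<le> card {j \<in> {1..n}. a j \<le> i}" by (rule card_image_le) simp
  finally show ?thesis by simp
qed

lemma count_ge_if_center_ok:
  assumes "center_ok n a X" "i \<le> card X"
  shows "i \<le> card {j \<in> {1..n}. a j \<le> i}"
proof -
  note X = center_okD[OF assms(1)]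
  then have "finite X" using finite_subset by blast
  have "nth_elem X ` {1..i} \<subseteq> {j \<in> {1..n}. a j \<le> i}"
  proof
    fix x assume "x \<in> nth_elem X ` {1..i}"
    then obtain l where l: "l \<in> {1..i}" "x = nth_elem X l" by blast
    then have "l \<in> {1..card X}" using assms(2) by simp
    then have "x \<in> X" "rank X x = l"
      using l(2) nth_elem_mem[OF \<open>finite X\<close>] rank_nth_elem[OF \<open>finite X\<close>] by auto
    then show "x \<in> {j \<in> {1..n}. a j \<le> i}" using X l(1) by fastforce
  qed
  moreover have "inj_on (nth_elem X) {1..i}"
    by (rule inj_on_subset[OF bij_betw_imp_inj_on[OF bij_betw_nth_elem[OF \<open>finite X\<close>]]])
       (use assms(2) in auto)
  ultimately show ?thesis using card_inj_on_le[of "nth_elem X" "{1..i}"] by simp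
qed

section \<open>Inversion tables of permutations\<close>

definition codes :: "nat \<Rightarrow> (nat \<Rightarrow> nat) set" where
  "codes k = (\<Pi>\<^sub>E v \<in> {1..k}. {1..v})"

lemma perms_bij_betw: "w \<in> perms k \<Longrightarrow> bij_betw w {1..k} {1..k}"
  unfolding perms_def by blast

lemma tk_eq_card:
  assumes w: "w \<in> perms k" and v: "v \<in> {1..k}"
  shows "tk k w v = card {u \<in> {1..v}. inv_into {1..k} w u \<le> inv_into {1..k} w v}"
proof -
  let ?P = "inv_into {1..k} w"
  have bij: "bij_betw w {1..k} {1..k}" using w by (rule perms_bij_betw)
  have P_mem: "?P u \<in> {1..k}" and w_P: "w (?P u) = u" if "u \<in> {1..k}" for u
    using bij_betwE[OF bij_betw_inv_into[OF bij]] bij_betw_inv_into_right[OF bij] that by auto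
  have P_w: "?P (w m) = m" and w_mem: "w m \<in> {1..k}" if "m \<in> {1..k}" for m
    using bij_betw_inv_into_left[OF bij] bij_betwE[OF bij] that by auto
  have "(THE i. i \<in> {1..k} \<and> w i = v) = ?P v"
  proof (rule the_equality)
    show "?P v \<in> {1..k} \<and> w (?P v) = v" using P_mem[OF v] w_P[OF v] by simp
    fix i assume "i \<in> {1..k} \<and> w i = v"
    then show "i = ?P v" using P_w by metis
  qed
  then have "tk k w v = card {m \<in> {1..?P v}. w m \<le> v}"
    using v w_P[OF v] unfolding tk_def by (simp add: Let_def)
  also have "\<dots> = card {u \<in> {1..v}. ?P u \<le> ?P v}"
  proof (rule bij_betw_same_card, rule bij_betw_byWitness[where f' = ?P])
    have "m \<in> {1..k}" if "m \<in> {1..?P v}" for m using that P_mem[OF v] by simp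
    then show "\<forall>m\<in>{m \<in> {1..?P v}. w m \<le> v}. ?P (w m) = m"
      and "w ` {m \<in> {1..?P v}. w m \<le> v} \<subseteq> {u \<in> {1..v}. ?P u \<le> ?P v}"
      using P_w w_mem by auto
    have "u \<in> {1..k}" if "u \<in> {1..v}" for u using that v by simp
    then show "\<forall>u\<in>{u \<in> {1..v}. ?P u \<le> ?P v}. w (?P u) = u"
      and "?P ` {u \<in> {1..v}. ?P u \<le> ?P v} \<subseteq> {m \<in> {1..?P v}. w m \<le> v}"
      using P_mem w_P by auto
  qed
  finally show ?thesis .
qed

lemma tk_mem_codes:
  assumes "w \<in> perms k"
  shows "tk k w \<in> codes k"
proof -
  have "tk k w v \<in> {1..v}" if v: "v \<in> {1..k}" for v
  proof -
    let ?C = "{u \<in> {1..v}. inv_into {1..k} w u \<le> inv_into {1..k} w v}"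
    have "v \<in> ?C" using v by simp
    then have "0 < card ?C" by (auto simp: card_gt_0_iff)
    moreover have "card ?C \<le> card {1..v}" by (rule card_mono) auto
    ultimately show ?thesis using tk_eq_card[OF assms v] by simp
  qed
  then show ?thesis unfolding codes_def tk_def by auto
qed

text \<open>The code of a permutation records, for each prefix of values, where the last
  value ranks among them; inductively this pins down the relative order of all values.\<close>

lemma prefix_order_Suc:
  fixes P Q :: "nat \<Rightarrow> nat"
  assumes inj: "inj_on P {1..Suc v}" "inj_on Q {1..Suc v}"
    and agree: "\<And>x y. x \<in> {1..v} \<Longrightarrow> y \<in> {1..v} \<Longrightarrow> P x \<le> P y \<longleftrightarrow> Q x \<le> Q y"
    and card_eq: "card {u \<in> {1..Suc v}. P u \<le> P (Suc v)} = card {u \<in> {1..Suc v}. Q u \<le> Q (Suc v)}"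
    and x: "x \<in> {1..Suc v}" and y: "y \<in> {1..Suc v}"
  shows "P x \<le> P y \<longleftrightarrow> Q x \<le> Q y"
proof -
  let ?s = "Suc v"
  define A where "A = {u \<in> {1..v}. P u \<le> P ?s}"
  define B where "B = {u \<in> {1..v}. Q u \<le> Q ?s}"
  have "{u \<in> {1..?s}. P u \<le> P ?s} = insert ?s A" "{u \<in> {1..?s}. Q u \<le> Q ?s} = insert ?s B"
    unfolding A_def B_def by auto
  then have "card A = card B" using card_eq unfolding A_def B_def by simp
  moreover have "A \<subseteq> B \<or> B \<subseteq> A"
  proof (rule ccontr)
    assume "\<not> (A \<subseteq> B \<or> B \<subseteq> A)"
    then obtain a b where a: "a \<in> A" "a \<notin> B" and b: "b \<in> B" "b \<notin> A" by blast
    have ab: "a \<in> {1..v}" "b \<in> {1..v}" using a(1) b(1) unfolding A_def B_def by auto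
    have "P a \<le> P b" using a(1) b(2) ab unfolding A_def by auto
    then have "Q a \<le> Q b" using agree ab by blast
    then have "a \<in> B" using b(1) ab unfolding B_def by auto
    with a show False by blast
  qed
  ultimately have "A = B"
    using card_subset_eq[of B A] card_subset_eq[of A B] unfolding A_def B_def by fastforce
  then have below: "P u \<le> P ?s \<longleftrightarrow> Q u \<le> Q ?s" if "u \<in> {1..v}" for u
    using that unfolding A_def B_def by blast
  have above: "P ?s \<le> P u \<longleftrightarrow> Q ?s \<le> Q u" if "u \<in> {1..v}" for u
  proof -
    have "P u \<noteq> P ?s" "Q u \<noteq> Q ?s" using inj that by (auto dest: inj_onD)
    then show ?thesis using below[OF that] by auto
  qed
  consider "x = ?s" "y = ?s" | "x = ?s" "y \<in> {1..v}" | "x \<in> {1..v}" "y = ?s"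
    | "x \<in> {1..v}" "y \<in> {1..v}"
    using x y by fastforce
  then show ?thesis
    by cases (simp_all add: below above agree)
qed

lemma prefix_order_determined:
  fixes P Q :: "nat \<Rightarrow> nat"
  assumes "inj_on P {1..k}" "inj_on Q {1..k}"
    and "\<And>v. v \<in> {1..k} \<Longrightarrow> card {u \<in> {1..v}. P u \<le> P v} = card {u \<in> {1..v}. Q u \<le> Q v}"
    and "x \<in> {1..k}" "y \<in> {1..k}"
  shows "P x \<le> P y \<longleftrightarrow> Q x \<le> Q y"
  using assms
proof (induction k arbitrary: x y)
  case (Suc v)
  have inj: "inj_on P {1..v}" "inj_on Q {1..v}"
    using Suc.prems(1,2) by (auto intro: inj_on_subset)
  have "card {u \<in> {1..v'}. P u \<le> P v'} = card {u \<in> {1..v'}. Q u \<le> Q v'}" if "v' \<in> {1..v}" for v'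
    using Suc.prems(3) that by simp
  then have agree: "P x' \<le> P y' \<longleftrightarrow> Q x' \<le> Q y'" if "x' \<in> {1..v}" "y' \<in> {1..v}" for x' y'
    using Suc.IH[OF inj _ that] by blast
  show ?case
    by (rule prefix_order_Suc[OF Suc.prems(1,2) agree Suc.prems(3) Suc.prems(4,5)]) simp_all
qed simp

lemma bij_betw_eq_card_le:
  fixes P :: "nat \<Rightarrow> nat"
  assumes bij: "bij_betw P {1..k} {1..k}" and v: "v \<in> {1..k}"
  shows "P v = card {u \<in> {1..k}. P u \<le> P v}"
proof -
  have "P ` {u \<in> {1..k}. P u \<le> P v} = {1..P v}"
  proof
    show "P ` {u \<in> {1..k}. P u \<le> P v} \<subseteq> {1..P v}" using bij_betwE[OF bij] by auto
    show "{1..P v} \<subseteq> P ` {u \<in> {1..k}. P u \<le> P v}"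
    proof
      fix m assume m: "m \<in> {1..P v}"
      have "P v \<in> {1..k}" using bij_betwE[OF bij] v by blast
      then have "m \<in> P ` {1..k}" using m bij_betw_imp_surj_on[OF bij] by auto
      then show "m \<in> P ` {u \<in> {1..k}. P u \<le> P v}" using m by auto
    qed
  qed
  moreover have "inj_on P {u \<in> {1..k}. P u \<le> P v}"
    using bij_betw_imp_inj_on[OF bij] by (rule inj_on_subset) auto
  ultimately show ?thesis using card_image by fastforce
qed

lemma inj_on_tk: "inj_on (tk k) (perms k)"
proof (rule inj_onI)
  fix w1 w2 assume w1: "w1 \<in> perms k" and w2: "w2 \<in> perms k" and eq: "tk k w1 = tk k w2"
  let ?P = "inv_into {1..k} w1" and ?Q = "inv_into {1..k} w2"
  have b1: "bij_betw w1 {1..k} {1..k}" and b2: "bij_betw w2 {1..k} {1..k}"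
    using perms_bij_betw[OF w1] perms_bij_betw[OF w2] .
  have bP: "bij_betw ?P {1..k} {1..k}" and bQ: "bij_betw ?Q {1..k} {1..k}"
    using bij_betw_inv_into[OF b1] bij_betw_inv_into[OF b2] .
  have "card {u \<in> {1..v}. ?P u \<le> ?P v} = card {u \<in> {1..v}. ?Q u \<le> ?Q v}" if "v \<in> {1..k}" for v
    using tk_eq_card[OF w1 that] tk_eq_card[OF w2 that] eq by simp
  then have agree: "?P x \<le> ?P y \<longleftrightarrow> ?Q x \<le> ?Q y" if "x \<in> {1..k}" "y \<in> {1..k}" for x y
    using prefix_order_determined[OF bij_betw_imp_inj_on[OF bP] bij_betw_imp_inj_on[OF bQ] _ that]
    by blast
  have P_Q: "?P v = ?Q v" if v: "v \<in> {1..k}" for v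
  proof -
    have "{u \<in> {1..k}. ?P u \<le> ?P v} = {u \<in> {1..k}. ?Q u \<le> ?Q v}" using agree[OF _ v] by blast
    then show ?thesis using bij_betw_eq_card_le[OF bP v] bij_betw_eq_card_le[OF bQ v] by simp
  qed
  show "w1 = w2"
  proof (rule extensionalityI)
    show "w1 \<in> extensional {1..k}" "w2 \<in> extensional {1..k}"
      using w1 w2 by (simp_all add: perms_def PiE_iff)
    fix i assume i: "i \<in> {1..k}"
    have w2i: "w2 i \<in> {1..k}" using bij_betwE[OF b2] i by blast
    have "?P (w2 i) = i" using P_Q[OF w2i] bij_betw_inv_into_left[OF b2 i] by simp
    then show "w1 i = w2 i" using bij_betw_inv_into_right[OF b1 w2i] by simp
  qed
qed

lemma card_perms: "card (perms k) = fact k"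
proof -
  have "bij_betw (\<lambda>p. restrict p {1..k}) {p. p permutes {1..k}} (perms k)"
  proof (rule bij_betw_byWitness[where f' = "\<lambda>w. restrict_id w {1..k}"])
    show "\<forall>p\<in>{p. p permutes {1..k}}. restrict_id (restrict p {1..k}) {1..k} = p"
      by (auto simp: restrict_id_def fun_eq_iff permutes_not_in)
    show "\<forall>w\<in>perms k. restrict (restrict_id w {1..k}) {1..k} = w"
      by (auto simp: perms_def restrict_id_def fun_eq_iff PiE_iff extensional_def)
    show "(\<lambda>p. restrict p {1..k}) ` {p. p permutes {1..k}} \<subseteq> perms k"
    proof safe
      fix p assume p: "p permutes {1..k}"
      have "restrict p {1..k} \<in> {1..k} \<rightarrow>\<^sub>E {1..k}"
        unfolding restrict_PiE_iff using permutes_in_image[OF p] by blast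
      then show "restrict p {1..k} \<in> perms k"
        using permutes_imp_bij[OF p] by (simp add: perms_def)
    qed
    show "(\<lambda>w. restrict_id w {1..k}) ` perms k \<subseteq> {p. p permutes {1..k}}"
      by (auto simp: perms_def intro: permutes_restrict_id)
  qed
  then have "card (perms k) = card {p. p permutes {1..k}}" by (simp add: bij_betw_same_card)
  also have "\<dots> = fact k" by (simp add: card_permutations)
  finally show ?thesis .
qed

lemma card_codes: "card (codes k) = fact k"
  unfolding codes_def by (simp add: card_PiE fact_prod)

lemma tk_image_perms: "tk k ` perms k = codes k"
proof (rule card_subset_eq)
  show "finite (codes k)" unfolding codes_def by (simp add: finite_PiE)
  show "tk k ` perms k \<subseteq> codes k" using tk_mem_codes by blast
  show "card (tk k ` perms k) = card (codes k)"
    by (simp add: card_image[OF inj_on_tk] card_perms card_codes)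
qed

lemma
  assumes "f \<in> codes k"
  shows tk_inv_mem_perms: "tk_inv k f \<in> perms k"
    and tk_tk_inv: "tk k (tk_inv k f) = f"
proof -
  obtain w0 where w0: "w0 \<in> perms k" "tk k w0 = f"
    using assms tk_image_perms[of k] by (metis imageE)
  then have "\<exists>!w. w \<in> perms k \<and> tk k w = f"
    using inj_on_tk[of k] by (intro ex1I[of _ w0]) (auto dest: inj_onD)
  then have "tk_inv k f \<in> perms k \<and> tk k (tk_inv k f) = f"
    unfolding tk_inv_def by (rule theI')
  then show "tk_inv k f \<in> perms k" "tk k (tk_inv k f) = f" by auto
qed

lemma tk_inv_tk:
  assumes w: "w \<in> perms k" shows "tk_inv k (tk k w) = w"
proof (rule inj_onD[OF inj_on_tk])
  show "tk k (tk_inv k (tk k w)) = tk k w" by (rule tk_tk_inv[OF tk_mem_codes[OF w]])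
  show "tk_inv k (tk k w) \<in> perms k" by (rule tk_inv_mem_perms[OF tk_mem_codes[OF w]])
qed (rule w)

lemma words_mem: "a \<in> words n \<Longrightarrow> j \<in> {1..n} \<Longrightarrow> a j \<in> {1..n}"
  unfolding words_def by auto

lemma words_extensional: "a \<in> words n \<Longrightarrow> a \<in> extensional {1..n}"
  unfolding words_def by (simp add: PiE_iff)

lemma restrict_mem_words:
  "(\<And>j. j \<in> {1..n} \<Longrightarrow> f j \<in> {1..n}) \<Longrightarrow> restrict f {1..n} \<in> words n"
  unfolding words_def by simp

section \<open>The map \<open>Phi\<close> on words with nonempty center\<close>

locale nonempty_center =
  fixes n :: nat and a :: "nat \<Rightarrow> nat"
  assumes word: "a \<in> words n" and Zc_nonempty: "Zc n a \<noteq> {}"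
begin

abbreviation Z :: "nat set" where "Z \<equiv> Zc n a"
abbreviation k :: nat where "k \<equiv> card (Zc n a)"

definition code :: "nat \<Rightarrow> nat" where
  "code = restrict (\<lambda>l. a (nth_elem Z l)) {1..k}"

definition b :: "nat \<Rightarrow> nat" where
  "b = tk_inv k code"

definition \<sigma> :: "nat \<Rightarrow> nat" where
  "\<sigma> = (\<lambda>j. if j = 1 then k + 1 else if 2 \<le> j \<and> j \<le> k + 1 then b (j - 1) else j)"

lemma Phi_eq: "Phi n a = restrict (\<lambda>j. if j \<in> Z then b (rank Z j) else \<sigma> (a j)) {1..n}"
proof -
  have "Phi n a = restrict (\<lambda>j. if j \<in> Z then b (THE l. l \<in> {1..k} \<and> nth_elem Z l = j)
                                else \<sigma> (a j)) {1..n}"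
    unfolding Phi_def Let_def code_def b_def \<sigma>_def by (simp only: if_not_P[OF Zc_nonempty])
  also have "\<dots> = restrict (\<lambda>j. if j \<in> Z then b (rank Z j) else \<sigma> (a j)) {1..n}"
    using the_nth_elem_eq_rank[OF finite_Zc] by (intro restrict_ext) auto
  finally show ?thesis .
qed

lemma k_le: "k \<le> n"
  using card_mono[OF _ Zc_subset] by simp

lemma code_mem_codes: "code \<in> codes k"
proof -
  have "a (nth_elem Z l) \<in> {1..l}" if l: "l \<in> {1..k}" for l
  proof -
    have x: "nth_elem Z l \<in> Z" using nth_elem_mem[OF finite_Zc l] .
    have "a (nth_elem Z l) \<le> l" using Zc_le_rank[OF x] rank_nth_elem[OF finite_Zc l] by simp
    moreover have "a (nth_elem Z l) \<in> {1..n}" using words_mem[OF word] x Zc_subset by blast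
    ultimately show ?thesis by simp
  qed
  then show ?thesis unfolding code_def codes_def by simp
qed

lemma b_mem_perms: "b \<in> perms k"
  unfolding b_def by (rule tk_inv_mem_perms[OF code_mem_codes])

lemma tk_b: "tk k b = code"
  unfolding b_def by (rule tk_tk_inv[OF code_mem_codes])

lemma b_bij_betw: "bij_betw b {1..k} {1..k}"
  by (rule perms_bij_betw[OF b_mem_perms])

lemma b_mem: "l \<in> {1..k} \<Longrightarrow> b l \<in> {1..k}"
  using bij_betwE[OF b_bij_betw] by blast

lemma b_eq_iff: "l \<in> {1..k} \<Longrightarrow> l' \<in> {1..k} \<Longrightarrow> b l = b l' \<longleftrightarrow> l = l'"
  using bij_betw_imp_inj_on[OF b_bij_betw] by (auto dest: inj_onD)

lemma Phi_Zc: "x \<in> Z \<Longrightarrow> Phi n a x = b (rank Z x)"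
  using Zc_subset[of n a] by (auto simp: Phi_eq)

lemma Phi_notin_Zc_cases [consumes 2, case_names small large]:
  assumes j: "j \<in> {1..n}" "j \<notin> Z"
  obtains (small) "a j - 1 \<in> {1..k}" "Phi n a j = b (a j - 1)"
    | (large) "k + 1 < a j" "Phi n a j = a j"
proof -
  have Phi: "Phi n a j = \<sigma> (a j)" using j by (simp add: Phi_eq)
  have "2 \<le> a j" using rank_less_notin_Zc[OF j] by simp
  show thesis
  proof (cases "a j \<le> k + 1")
    case True
    then show thesis using \<open>2 \<le> a j\<close> Phi by (intro small) (auto simp: \<sigma>_def)
  next
    case False
    then show thesis using Phi by (intro large) (auto simp: \<sigma>_def)
  qed
qed

lemma Phi_mem_words: "Phi n a \<in> words n"
proof -
  have "Phi n a j \<in> {1..n}" if j: "j \<in> {1..n}" for j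
  proof (cases "j \<in> Z")
    case True
    then show ?thesis using Phi_Zc b_mem rank_mem[OF finite_Zc] k_le by fastforce
  next
    case False
    show ?thesis
    using j False proof (cases rule: Phi_notin_Zc_cases)
      case small
      then show ?thesis using b_mem[OF small(1)] k_le by simp
    next
      case large
      then show ?thesis using words_mem[OF word j] by simp
    qed
  qed
  then show ?thesis unfolding Phi_eq by (intro restrict_mem_words) (simp add: Phi_eq)
qed

lemma atLeastAtMost_subset_image_Phi: "{1..k} \<subseteq> Phi n a ` {1..n}"
proof
  fix m assume "m \<in> {1..k}"
  then obtain l where l: "l \<in> {1..k}" "m = b l"
    using bij_betw_imp_surj_on[OF b_bij_betw] by blast
  have "nth_elem Z l \<in> Z" "rank Z (nth_elem Z l) = l"
    using nth_elem_mem[OF finite_Zc l(1)] rank_nth_elem[OF finite_Zc l(1)] by auto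
  then show "m \<in> Phi n a ` {1..n}" using Phi_Zc l(2) Zc_subset by (metis image_eqI subsetD)
qed

lemma Suc_k_notin_image_Phi: "Suc k \<notin> Phi n a ` {1..n}"
proof
  assume "Suc k \<in> Phi n a ` {1..n}"
  then obtain j where Phi_j: "Suc k = Phi n a j" and j: "j \<in> {1..n}" by (rule imageE)
  show False
  proof (cases "j \<in> Z")
    case True
    then show False using Phi_j Phi_Zc b_mem rank_mem[OF finite_Zc] by fastforce
  next
    case False
    with j show False
    proof (cases rule: Phi_notin_Zc_cases)
      case small
      then show False using Phi_j b_mem by fastforce
    qed (use Phi_j in simp)
  qed
qed

lemma run_Phi: "run n (Phi n a) = k"
  using run_eqI[OF atLeastAtMost_subset_image_Phi k_le Suc_k_notin_image_Phi] .

text \<open>A position \<open>j\<close> outside the center with \<open>Phi n a j = b l\<close> has \<open>a j = l + 1\<close>; if it lay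
  right of \<open>nth_elem Z l\<close> it could be added to the center.\<close>

lemma last_occ_Phi:
  assumes l: "l \<in> {1..k}"
  shows "last_occ n (Phi n a) (b l) = nth_elem Z l"
proof (rule last_occ_eqI)
  have x: "nth_elem Z l \<in> Z" "rank Z (nth_elem Z l) = l"
    using nth_elem_mem[OF finite_Zc l] rank_nth_elem[OF finite_Zc l] by auto
  then show "nth_elem Z l \<in> {1..n}" "Phi n a (nth_elem Z l) = b l"
    using Zc_subset[of n a] Phi_Zc by auto
  fix j assume j: "j \<in> {1..n}" and Phi_j: "Phi n a j = b l"
  show "j \<le> nth_elem Z l"
  proof (cases "j \<in> Z")
    case True
    then have "rank Z j = l" using Phi_j Phi_Zc b_eq_iff l rank_mem[OF finite_Zc] by metis
    then show ?thesis using nth_elem_rank[OF finite_Zc True] by simp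
  next
    case False
    show ?thesis
    using j False proof (cases rule: Phi_notin_Zc_cases)
      case small
      then have "a j - 1 = l" using Phi_j b_eq_iff[OF small(1) l] by simp
      then have "a j = Suc l" using l by auto
      show ?thesis
      proof (rule ccontr)
        assume "\<not> j \<le> nth_elem Z l"
        then have "l \<le> rank Z j" using rank_mono[OF finite_Zc] x(2) by (metis nat_le_linear)
        then show False using rank_less_notin_Zc[OF j False] \<open>a j = Suc l\<close> by simp
      qed
    next
      case large
      then show ?thesis using Phi_j b_mem[OF l] by simp
    qed
  qed
qed

lemma Run_Phi: "Run n (Phi n a) = Z"
proof -
  have "Run n (Phi n a) = last_occ n (Phi n a) ` b ` {1..k}"
    unfolding Run_eq_image_last_occ run_Phi bij_betw_imp_surj_on[OF b_bij_betw] ..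
  also have "\<dots> = nth_elem Z ` {1..k}"
    unfolding image_image using last_occ_Phi by (rule image_cong[OF refl])
  also have "\<dots> = Z" using bij_betw_imp_surj_on[OF bij_betw_nth_elem[OF finite_Zc]] .
  finally show ?thesis .
qed

lemma Phi_le_iff:
  assumes j: "j \<in> {1..n}" and i: "k < i"
  shows "Phi n a j \<le> i \<longleftrightarrow> a j \<le> i"
proof (cases "j \<in> Z")
  case True
  then have "Phi n a j \<le> k" "a j \<le> k"
    using Phi_Zc b_mem rank_mem[OF finite_Zc] Zc_le_rank by fastforce+
  then show ?thesis using i by simp
next
  case False
  show ?thesis
    using j False
  proof (cases rule: Phi_notin_Zc_cases)
    case small
    then have "Phi n a j \<le> k" "a j \<le> k + 1" using b_mem[OF small(1)] by auto
    then show ?thesis using i by simp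
  qed simp
qed

text \<open>For \<open>i \<le> k\<close> both words have at least \<open>i\<close> entries \<open>\<le> i\<close> (the values \<open>1..k\<close> occur in
  \<open>Phi n a\<close>, and \<open>Z\<close> is admissible for \<open>a\<close>); for \<open>i > k\<close> the relabelling does not move any entry
  across \<open>i\<close>.\<close>

lemma Phi_mem_PF_iff: "Phi n a \<in> PF n \<longleftrightarrow> a \<in> PF n"
proof -
  have "i \<le> card {j \<in> {1..n}. Phi n a j \<le> i} \<longleftrightarrow> i \<le> card {j \<in> {1..n}. a j \<le> i}" for i
  proof (cases "i \<le> k")
    case True
    then have "{1..i} \<subseteq> Phi n a ` {1..n}" using atLeastAtMost_subset_image_Phi by auto
    then show ?thesis
      using count_ge_if_atLeastAtMost_subset_image count_ge_if_center_ok[OF center_ok_Zc True]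
      by blast
  next
    case False
    then have "{j \<in> {1..n}. Phi n a j \<le> i} = {j \<in> {1..n}. a j \<le> i}" using Phi_le_iff by auto
    then show ?thesis by simp
  qed
  then show ?thesis unfolding PF_def using Phi_mem_words word by blast
qed

end

section \<open>The map \<open>Psi\<close> on words with nonempty run\<close>

locale nonempty_run =
  fixes n :: nat and a :: "nat \<Rightarrow> nat"
  assumes word: "a \<in> words n" and Run_nonempty: "Run n a \<noteq> {}"
begin

abbreviation R :: "nat set" where "R \<equiv> Run n a"
abbreviation k :: nat where "k \<equiv> card (Run n a)"

definition w :: "nat \<Rightarrow> nat" where
  "w = restrict (\<lambda>l. a (nth_elem R l)) {1..k}"

definition \<tau> :: "nat \<Rightarrow> nat" where
  "\<tau> = (\<lambda>j. if j \<in> {1..k} then (THE l. l \<in> {1..k} \<and> a (nth_elem R l) = j) + 1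
            else if j = k + 1 then 1 else j)"

lemma k_eq_run: "k = run n a"
  by (rule card_Run)

lemma Run_eq_image: "R = last_occ n a ` {1..k}"
  unfolding k_eq_run by (rule Run_eq_image_last_occ)

lemma value_mem_image: "m \<in> {1..k} \<Longrightarrow> m \<in> a ` {1..n}"
  using atLeastAtMost_run_subset[of n a] k_eq_run by auto

lemma last_occ_mem_Run: "m \<in> {1..k} \<Longrightarrow> last_occ n a m \<in> R"
  using Run_eq_image by blast

lemma Run_subset: "R \<subseteq> {1..n}"
proof
  fix x assume "x \<in> R"
  then obtain m where "m \<in> {1..k}" "x = last_occ n a m" using Run_eq_image by blast
  then show "x \<in> {1..n}" using last_occ_mem[OF value_mem_image] by simp
qed

lemma finite_Run: "finite R"
  using Run_subset by (rule finite_subset) simp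

lemma apply_mem:
  assumes "x \<in> R"
  shows "a x \<in> {1..k}"
proof -
  obtain m where m: "m \<in> {1..k}" "x = last_occ n a m" using assms Run_eq_image by blast
  then show ?thesis using apply_last_occ[OF value_mem_image[OF m(1)]] by simp
qed

lemma k_less_n:
  assumes "j \<in> {1..n}" "j \<notin> R"
  shows "k < n"
proof (rule ccontr)
  assume "\<not> k < n"
  then have "card R = card {1..n}" using run_le[of n a] k_eq_run by simp
  then have "R = {1..n}" using card_subset_eq[OF _ Run_subset] by simp
  then show False using assms by simp
qed

lemma Psi_eq: "Psi n a = restrict (\<lambda>j. if j \<in> R then tk k w (rank R j) else \<tau> (a j)) {1..n}"
proof -
  have "Psi n a = restrict (\<lambda>j. if j \<in> R then tk k w (THE l. l \<in> {1..k} \<and> nth_elem R l = j)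
                                else \<tau> (a j)) {1..n}"
    unfolding Psi_def Let_def w_def \<tau>_def by (simp only: if_not_P[OF Run_nonempty])
  also have "\<dots> = restrict (\<lambda>j. if j \<in> R then tk k w (rank R j) else \<tau> (a j)) {1..n}"
    using the_nth_elem_eq_rank[OF finite_Run] by (intro restrict_ext) auto
  finally show ?thesis .
qed

lemma w_rank_last_occ:
  assumes m: "m \<in> {1..k}"
  shows "w (rank R (last_occ n a m)) = m"
proof -
  have x: "last_occ n a m \<in> R" using last_occ_mem_Run[OF m] .
  then show ?thesis
    using rank_mem[OF finite_Run x] nth_elem_rank[OF finite_Run x] apply_last_occ[OF value_mem_image[OF m]]
    by (simp add: w_def)
qed

lemma w_mem_perms: "w \<in> perms k"
proof -
  have image: "w ` {1..k} = {1..k}"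
  proof
    show "w ` {1..k} \<subseteq> {1..k}"
      using apply_mem nth_elem_mem[OF finite_Run] by (auto simp: w_def)
    show "{1..k} \<subseteq> w ` {1..k}"
      using w_rank_last_occ rank_mem[OF finite_Run] last_occ_mem_Run by (metis image_eqI subsetI)
  qed
  then have "inj_on w {1..k}" by (intro eq_card_imp_inj_on) simp_all
  with image have "bij_betw w {1..k} {1..k}" by (simp add: bij_betw_def)
  moreover have "w \<in> {1..k} \<rightarrow>\<^sub>E {1..k}" using image by (auto simp: w_def)
  ultimately show ?thesis unfolding perms_def by simp
qed

lemma \<tau>_small:
  assumes m: "m \<in> {1..k}"
  shows "\<tau> m = rank R (last_occ n a m) + 1"
proof -
  have "(THE l. l \<in> {1..k} \<and> a (nth_elem R l) = m) = rank R (last_occ n a m)"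
  proof (rule the_equality)
    show "rank R (last_occ n a m) \<in> {1..k} \<and> a (nth_elem R (rank R (last_occ n a m))) = m"
      using rank_mem[OF finite_Run last_occ_mem_Run[OF m]] w_rank_last_occ[OF m] by (simp add: w_def)
    fix l assume l: "l \<in> {1..k} \<and> a (nth_elem R l) = m"
    then have "w l = w (rank R (last_occ n a m))" using w_rank_last_occ[OF m] by (simp add: w_def)
    then show "l = rank R (last_occ n a m)"
      using bij_betw_imp_inj_on[OF perms_bij_betw[OF w_mem_perms]] l
        rank_mem[OF finite_Run last_occ_mem_Run[OF m]] by (auto dest: inj_onD)
  qed
  then show ?thesis using m by (simp add: \<tau>_def)
qed

lemma Psi_Run: "x \<in> R \<Longrightarrow> Psi n a x = tk k w (rank R x)"
  using Run_subset by (auto simp: Psi_eq)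

lemma Psi_notin_Run_cases [consumes 2, case_names small large]:
  assumes j: "j \<in> {1..n}" "j \<notin> R"
  obtains (small) "a j \<in> {1..k}" "Psi n a j = rank R (last_occ n a (a j)) + 1"
    | (large) "k + 1 < a j" "Psi n a j = a j"
proof -
  have Psi: "Psi n a j = \<tau> (a j)" using j by (simp add: Psi_eq)
  have "Suc k \<notin> a ` {1..n}" using Suc_run_notin_image k_less_n[OF j] k_eq_run by simp
  moreover have "a j \<in> a ` {1..n}" using j(1) by blast
  ultimately have "a j \<noteq> k + 1" by auto
  moreover have "a j \<in> {1..n}" using words_mem[OF word j(1)] .
  ultimately consider "a j \<in> {1..k}" | "k + 1 < a j" by fastforce
  then show thesis
  proof cases
    case 1
    then show thesis using Psi \<tau>_small by (intro small) auto
  next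
    case 2
    then show thesis using Psi by (intro large) (auto simp: \<tau>_def)
  qed
qed

lemma Psi_mem_words: "Psi n a \<in> words n"
proof -
  have "Psi n a j \<in> {1..n}" if j: "j \<in> {1..n}" for j
  proof (cases "j \<in> R")
    case True
    have "tk k w (rank R j) \<in> {1..rank R j}"
      using tk_mem_codes[OF w_mem_perms] rank_mem[OF finite_Run True] by (auto simp: codes_def)
    moreover have "rank R j \<le> n" using rank_le_card[OF finite_Run, of j] run_le[of n a] k_eq_run by simp
    ultimately show ?thesis using Psi_Run[OF True] by simp
  next
    case False
    show ?thesis
      using j False
    proof (cases rule: Psi_notin_Run_cases)
      case small
      then show ?thesis
        using rank_le_card[OF finite_Run, of "last_occ n a (a j)"] k_less_n[OF j False] by simp
    qed (use words_mem[OF word j] in simp)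
  qed
  then show ?thesis unfolding Psi_eq by (intro restrict_mem_words) (simp add: Psi_eq)
qed

text \<open>A position outside the run set lies strictly left of the last occurrence of its value,
  and its new value exceeds the rank of that last occurrence; hence it cannot join the center.\<close>

lemma Zc_Psi: "Zc n (Psi n a) = R"
proof (rule Zc_eqI[OF Run_subset])
  fix x assume x: "x \<in> R"
  have "tk k w (rank R x) \<in> {1..rank R x}"
    using tk_mem_codes[OF w_mem_perms] rank_mem[OF finite_Run x] by (auto simp: codes_def)
  then show "Psi n a x \<le> rank R x" using Psi_Run[OF x] by simp
next
  fix j assume j: "j \<in> {1..n}" "j \<notin> R"
  then show "Suc (rank R j) < Psi n a j"
  proof (cases rule: Psi_notin_Run_cases)
    case small
    let ?L = "last_occ n a (a j)"
    have "?L \<in> R" using last_occ_mem_Run[OF small(1)] .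
    moreover have "j \<le> ?L" using le_last_occ[OF value_mem_image[OF small(1)] j(1)] by simp
    ultimately have "j < ?L" using j(2) by (cases "j = ?L") auto
    then have "rank R j < rank R ?L" using rank_less[OF finite_Run \<open>?L \<in> R\<close>] by simp
    then show ?thesis using small(2) by simp
  next
    case large
    then show ?thesis using rank_le_card[OF finite_Run, of j] by simp
  qed
qed

end

section \<open>\<open>Phi\<close> and \<open>Psi\<close> are mutually inverse\<close>

context nonempty_center
begin

lemma nonempty_run_Phi: "nonempty_run n (Phi n a)"
  using Phi_mem_words Run_Phi Zc_nonempty by unfold_locales simp_all

lemma w_Phi: "nonempty_run.w n (Phi n a) = b"
proof -
  interpret psi: nonempty_run n "Phi n a" by (rule nonempty_run_Phi)
  show ?thesis
  proof (rule extensionalityI)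
    show "psi.w \<in> extensional {1..k}" unfolding psi.w_def Run_Phi by simp
    show "b \<in> extensional {1..k}" using b_mem_perms by (simp add: perms_def PiE_iff)
    fix l assume "l \<in> {1..k}"
    then show "psi.w l = b l"
      using Phi_Zc nth_elem_mem[OF finite_Zc] rank_nth_elem[OF finite_Zc]
      unfolding psi.w_def Run_Phi by simp
  qed
qed

lemma Psi_Phi_notin_Zc:
  assumes j: "j \<in> {1..n}" "j \<notin> Z"
  shows "Psi n (Phi n a) j = a j"
proof -
  interpret psi: nonempty_run n "Phi n a" by (rule nonempty_run_Phi)
  have j': "j \<notin> Run n (Phi n a)" using j Run_Phi by simp
  note Phi_cases = Phi_notin_Zc_cases[OF j]
  from j(1) j' show ?thesis
  proof (cases rule: psi.Psi_notin_Run_cases)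
    case small
    then have Phi_j: "Phi n a j \<in> {1..k}"
      and Psi_j: "Psi n (Phi n a) j = rank Z (last_occ n (Phi n a) (Phi n a j)) + 1"
      unfolding Run_Phi by simp_all
    show ?thesis
    proof (rule Phi_cases)
      assume l: "a j - 1 \<in> {1..k}" and "Phi n a j = b (a j - 1)"
      then have "Psi n (Phi n a) j = rank Z (nth_elem Z (a j - 1)) + 1"
        using Psi_j last_occ_Phi[OF l] by simp
      then show ?thesis using rank_nth_elem[OF finite_Zc l] l by auto
    qed (use Phi_j in simp)
  next
    case large
    then have big: "k + 1 < Phi n a j" and Psi_j: "Psi n (Phi n a) j = Phi n a j"
      unfolding Run_Phi by simp_all
    show ?thesis
    proof (rule Phi_cases)
      assume "a j - 1 \<in> {1..k}" "Phi n a j = b (a j - 1)"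
      then show ?thesis using big b_mem by fastforce
    qed (use Psi_j in simp)
  qed
qed

lemma Psi_Phi: "Psi n (Phi n a) = a"
proof -
  interpret psi: nonempty_run n "Phi n a" by (rule nonempty_run_Phi)
  show ?thesis
  proof (rule extensionalityI[OF words_extensional[OF psi.Psi_mem_words] words_extensional[OF word]])
    fix j assume j: "j \<in> {1..n}"
    show "Psi n (Phi n a) j = a j"
    proof (cases "j \<in> Z")
      case True
      then show ?thesis
        using psi.Psi_Run[of j] rank_mem[OF finite_Zc True] nth_elem_rank[OF finite_Zc True]
        unfolding Run_Phi w_Phi tk_b by (simp add: code_def)
    qed (rule Psi_Phi_notin_Zc[OF j])
  qed
qed

end

context nonempty_run
begin

lemma nonempty_center_Psi: "nonempty_center n (Psi n a)"
  using Psi_mem_words Zc_Psi Run_nonempty by unfold_locales simp_all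

lemma b_Psi: "nonempty_center.b n (Psi n a) = w"
proof -
  interpret phi: nonempty_center n "Psi n a" by (rule nonempty_center_Psi)
  have "phi.code = tk k w"
  proof (rule extensionalityI)
    show "phi.code \<in> extensional {1..k}" unfolding phi.code_def Zc_Psi by simp
    show "tk k w \<in> extensional {1..k}" by (simp add: tk_def)
    fix l assume "l \<in> {1..k}"
    then show "phi.code l = tk k w l"
      using Psi_Run nth_elem_mem[OF finite_Run] rank_nth_elem[OF finite_Run]
      unfolding phi.code_def Zc_Psi by simp
  qed
  then show ?thesis
    unfolding phi.b_def Zc_Psi using tk_inv_tk[OF w_mem_perms] by simp
qed

lemma Phi_Psi_notin_Run:
  assumes j: "j \<in> {1..n}" "j \<notin> R"
  shows "Phi n (Psi n a) j = a j"
proof -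
  interpret phi: nonempty_center n "Psi n a" by (rule nonempty_center_Psi)
  have j': "j \<notin> Zc n (Psi n a)" using j Zc_Psi by simp
  note Psi_cases = Psi_notin_Run_cases[OF j]
  from j(1) j' show ?thesis
  proof (cases rule: phi.Phi_notin_Zc_cases)
    case small
    then have l: "Psi n a j - 1 \<in> {1..k}" and Phi_j: "Phi n (Psi n a) j = w (Psi n a j - 1)"
      unfolding Zc_Psi b_Psi by simp_all
    show ?thesis
    proof (rule Psi_cases)
      assume "a j \<in> {1..k}" "Psi n a j = rank R (last_occ n a (a j)) + 1"
      then show ?thesis using Phi_j w_rank_last_occ by simp
    next
      assume "k + 1 < a j" "Psi n a j = a j"
      then show ?thesis using l by auto
    qed
  next
    case large
    then have big: "k + 1 < Psi n a j" and Phi_j: "Phi n (Psi n a) j = Psi n a j"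
      unfolding Zc_Psi by simp_all
    show ?thesis
    proof (rule Psi_cases)
      assume "a j \<in> {1..k}" "Psi n a j = rank R (last_occ n a (a j)) + 1"
      then show ?thesis using big rank_le_card[OF finite_Run, of "last_occ n a (a j)"] by simp
    qed (use Phi_j in simp)
  qed
qed

lemma Phi_Psi: "Phi n (Psi n a) = a"
proof -
  interpret phi: nonempty_center n "Psi n a" by (rule nonempty_center_Psi)
  show ?thesis
  proof (rule extensionalityI[OF words_extensional[OF phi.Phi_mem_words] words_extensional[OF word]])
    fix j assume j: "j \<in> {1..n}"
    show "Phi n (Psi n a) j = a j"
    proof (cases "j \<in> R")
      case True
      then show ?thesis
        using phi.Phi_Zc[of j] rank_mem[OF finite_Run True] nth_elem_rank[OF finite_Run True]
        unfolding Zc_Psi b_Psi by (simp add: w_def)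
    qed (rule Phi_Psi_notin_Run[OF j])
  qed
qed

end

lemma Zc_eq_empty_iff: "Zc n a = {} \<longleftrightarrow> (\<forall>j\<in>{1..n}. 1 < a j)"
proof
  assume "Zc n a = {}"
  then show "\<forall>j\<in>{1..n}. 1 < a j" using rank_less_notin_Zc[of _ n a] by (simp add: rank_def)
next
  assume "\<forall>j\<in>{1..n}. 1 < a j"
  then show "Zc n a = {}" by (intro Zc_eqI) (auto simp: rank_def)
qed

lemma Run_eq_empty_iff: "Run n a = {} \<longleftrightarrow> 1 \<notin> a ` {1..n}"
proof -
  have "finite (Run n a)" unfolding Run_def by simp
  then have "Run n a = {} \<longleftrightarrow> run n a = 0"
    using card_0_eq[of "Run n a"] card_Run[of n a] by simp
  also have "\<dots> \<longleftrightarrow> 1 \<notin> a ` {1..n}"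
  proof
    assume "run n a = 0"
    then show "1 \<notin> a ` {1..n}" using run_mem(1)[of a n] by auto
  qed (simp add: run_def)
  finally show ?thesis .
qed

lemma Zc_eq_empty_iff_Run_eq_empty:
  assumes "a \<in> words n"
  shows "Zc n a = {} \<longleftrightarrow> Run n a = {}"
  unfolding Zc_eq_empty_iff Run_eq_empty_iff
proof
  assume "\<forall>j\<in>{1..n}. 1 < a j"
  then show "1 \<notin> a ` {1..n}" by auto
next
  assume not_one: "1 \<notin> a ` {1..n}"
  show "\<forall>j\<in>{1..n}. 1 < a j"
  proof
    fix j assume j: "j \<in> {1..n}"
    then have "a j \<noteq> 1" using not_one by force
    with words_mem[OF assms j] show "1 < a j" by simp
  qed
qed

lemma
  assumes "a \<in> words n"
  shows Phi_mem_words: "Phi n a \<in> words n"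
    and Run_Phi: "Run n (Phi n a) = Zc n a"
    and Psi_Phi: "Psi n (Phi n a) = a"
    and Phi_mem_PF_iff: "Phi n a \<in> PF n \<longleftrightarrow> a \<in> PF n"
proof -
  have "Phi n a \<in> words n \<and> Run n (Phi n a) = Zc n a \<and> Psi n (Phi n a) = a
      \<and> (Phi n a \<in> PF n \<longleftrightarrow> a \<in> PF n)"
  proof (cases "Zc n a = {}")
    case True
    then have "Phi n a = a" "Run n a = {}"
      using Zc_eq_empty_iff_Run_eq_empty[OF assms] by (simp_all add: Phi_def)
    then show ?thesis using True assms by (simp add: Psi_def)
  next
    case False
    then interpret nonempty_center n a using assms by unfold_locales
    show ?thesis using Phi_mem_words Run_Phi Psi_Phi Phi_mem_PF_iff by simp
  qed
  then show "Phi n a \<in> words n" "Run n (Phi n a) = Zc n a" "Psi n (Phi n a) = a"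
    "Phi n a \<in> PF n \<longleftrightarrow> a \<in> PF n"
    by simp_all
qed

lemma
  assumes "a \<in> words n"
  shows Psi_mem_words: "Psi n a \<in> words n"
    and Zc_Psi: "Zc n (Psi n a) = Run n a"
    and Phi_Psi: "Phi n (Psi n a) = a"
proof -
  have "Psi n a \<in> words n \<and> Zc n (Psi n a) = Run n a \<and> Phi n (Psi n a) = a"
  proof (cases "Run n a = {}")
    case True
    then have "Psi n a = a" "Zc n a = {}"
      using Zc_eq_empty_iff_Run_eq_empty[OF assms] by (simp_all add: Psi_def)
    then show ?thesis using True assms by (simp add: Phi_def)
  next
    case False
    then interpret nonempty_run n a using assms by unfold_locales
    show ?thesis using Psi_mem_words Zc_Psi Phi_Psi by simp
  qed
  then show "Psi n a \<in> words n" "Zc n (Psi n a) = Run n a" "Phi n (Psi n a) = a"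
    by simp_all
qed

lemma zc_eq_run_Phi: "a \<in> words n \<Longrightarrow> zc n a = run n (Phi n a)"
  unfolding zc_def by (simp add: Run_Phi[symmetric] card_Run)

lemma run_eq_zc_Psi: "a \<in> words n \<Longrightarrow> run n a = zc n (Psi n a)"
  unfolding zc_def by (simp add: Zc_Psi card_Run)

lemma bij_betw_Phi: "bij_betw (Phi n) (words n) (words n)"
  by (rule bij_betw_byWitness[where f' = "Psi n"]) (auto simp: Phi_mem_words Psi_mem_words Psi_Phi Phi_Psi)

lemma bij_betw_Psi: "bij_betw (Psi n) (words n) (words n)"
  by (rule bij_betw_byWitness[where f' = "Phi n"]) (auto simp: Phi_mem_words Psi_mem_words Psi_Phi Phi_Psi)

lemma Psi_eq_inv_into_Phi: "a \<in> words n \<Longrightarrow> Psi n a = inv_into (words n) (Phi n) a"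
  using inv_into_f_f[OF bij_betw_imp_inj_on[OF bij_betw_Phi] Psi_mem_words] Phi_Psi by metis

lemma Phi_image_PF: "Phi n ` PF n = PF n"
proof
  have PF_words: "PF n \<subseteq> words n" by (auto simp: PF_def)
  then show "Phi n ` PF n \<subseteq> PF n" using Phi_mem_PF_iff by auto
  show "PF n \<subseteq> Phi n ` PF n"
  proof
    fix c assume c: "c \<in> PF n"
    then have "c \<in> words n" using PF_words by blast
    then have "Psi n c \<in> PF n" "Phi n (Psi n c) = c"
      using Phi_mem_PF_iff[OF Psi_mem_words] Phi_Psi c by auto
    then show "c \<in> Phi n ` PF n" by (metis image_eqI)
  qed
qed

theorem theorem3p4:
  fixes n :: nat
  assumes "n > 0"
  shows "(\<forall>a \<in> words n.
            zc n a = run n (Phi n a) \<and> Zc n a = Run n (Phi n a) \<and>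
            run n a = zc n (Psi n a) \<and> Run n a = Zc n (Psi n a))
       \<and> bij_betw (Phi n) (words n) (words n)
       \<and> bij_betw (Psi n) (words n) (words n)
       \<and> (\<forall>a \<in> words n. Psi n a = inv_into (words n) (Phi n) a)
       \<and> Phi n ` PF n = PF n"
  by (simp add: zc_eq_run_Phi run_eq_zc_Psi Run_Phi Zc_Psi bij_betw_Phi bij_betw_Psi
      Psi_eq_inv_into_Phi[symmetric] Phi_image_PF)

end
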